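(* Let $E$ be a countable Borel equivalence relation on a standard Borel space $X$ induced by a Borel action of a countable group $\Gamma$. If $\mathcal C_0,\mathcal C_1,\dots$ are countably many clubs of good Polish topologies on $X$, then $\bigcap_i\mathcal C_i$ is a club.
   Context: A Polish topology on $X$ is good if it generates the Borel structure of $X$ and makes the $\Gamma$-action continuous. A class $\mathcal C$ of good Polish topologies is a club if (cofinal) every good Polish topology is contained in some member of $\mathcal C$, and (closed) whenever $\tau_0\subseteq\tau_1\subseteq\cdots$ all lie in $\mathcal C$, the topology generated by $\bigcup_i\tau_i$ lies in $\mathcal C$. *)

theory Defs
  imports "HOL-Analysis.Analysis" "HOL-Algebra.Group_Action"
begin

definition Polish_top :: "'a topology \<Rightarrow> bool" where
  "Polish_top T \<longleftrightarrow> completely_metrizable_space T \<and> separable_space T"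

definition borel_sets_of :: "'a topology \<Rightarrow> 'a set set" where
  "borel_sets_of T = sigma_sets (topspace T) {U. openin T U}"

definition standard_Borel :: "'a measure \<Rightarrow> bool" where
  "standard_Borel M \<longleftrightarrow> (\<exists>T. Polish_top T \<and> topspace T = space M \<and> borel_sets_of T = sets M)"

definition Borel_action :: "('g, 'b) monoid_scheme \<Rightarrow> 'a measure \<Rightarrow> ('g \<Rightarrow> 'a \<Rightarrow> 'a) \<Rightarrow> bool" where
  "Borel_action G M \<phi> \<longleftrightarrow> group_action G (space M) \<phi> \<and> (\<forall>g\<in>carrier G. \<phi> g \<in> M \<rightarrow>\<^sub>M M)"

definition good_top :: "('g, 'b) monoid_scheme \<Rightarrow> 'a measure \<Rightarrow> ('g \<Rightarrow> 'a \<Rightarrow> 'a) \<Rightarrow> 'a topology \<Rightarrow> bool" where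
  "good_top G M \<phi> T \<longleftrightarrow> Polish_top T \<and> topspace T = space M \<and> borel_sets_of T = sets M
     \<and> (\<forall>g\<in>carrier G. continuous_map T T (\<phi> g))"

definition top_le :: "'a topology \<Rightarrow> 'a topology \<Rightarrow> bool" where
  "top_le T S \<longleftrightarrow> (\<forall>U. openin T U \<longrightarrow> openin S U)"

definition club :: "('g, 'b) monoid_scheme \<Rightarrow> 'a measure \<Rightarrow> ('g \<Rightarrow> 'a \<Rightarrow> 'a) \<Rightarrow> 'a topology set \<Rightarrow> bool" where
  "club G M \<phi> C \<longleftrightarrow>
     C \<subseteq> {T. good_top G M \<phi> T}
   \<and> (\<forall>T. good_top G M \<phi> T \<longrightarrow> (\<exists>S\<in>C. top_le T S))
   \<and> (\<forall>\<tau> :: nat \<Rightarrow> 'a topology. (\<forall>i. \<tau> i \<in> C) \<longrightarrow> (\<forall>i. top_le (\<tau> i) (\<tau> (Suc i))) \<longrightarrow>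
        topology_generated_by (\<Union>i. {U. openin (\<tau> i) U}) \<in> C)"

end

theory Submission
  imports Defs
begin

text \<open>Starting above a good topology \<open>T\<close>, cofinality yields an increasing chain whose
  \<open>k\<close>-th member lies in \<open>C (fst (prod_decode k))\<close>. For each \<open>i\<close>, the members indexed by
  \<open>prod_encode (i, j)\<close> form a subchain in \<open>C i\<close> that is cofinal in the whole chain, so by
  closedness of \<open>C i\<close> the topology generated by the chain lies in every \<open>C i\<close>.\<close>

lemma top_le_refl: "top_le T T"
  unfolding top_le_def by blast

lemma top_le_trans: "top_le A B \<Longrightarrow> top_le B D \<Longrightarrow> top_le A D"
  unfolding top_le_def by blast

lemma top_le_topology_generated_by:
  assumes "{U. openin T U} \<subseteq> S"
  shows "top_le T (topology_generated_by S)"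
  using assms unfolding top_le_def openin_topology_generated_by_iff
  by (blast intro: generate_topology_on.Basis)

lemma top_le_chain_mono:
  assumes chain: "\<And>i. top_le (\<tau> i) (\<tau> (Suc i))" and "m \<le> n"
  shows "top_le (\<tau> m) (\<tau> n)"
  using \<open>m \<le> n\<close>
proof (induction n rule: dec_induct)
  case base
  show ?case by (rule top_le_refl)
next
  case (step n)
  then show ?case using chain top_le_trans by blast
qed

lemma Union_opens_chain_subseq:
  assumes chain: "\<And>i. top_le (\<tau> i) (\<tau> (Suc i))" and s: "strict_mono (s :: nat \<Rightarrow> nat)"
  shows "(\<Union>j. {U. openin (\<tau> (s j)) U}) = (\<Union>k. {U. openin (\<tau> k) U})"
proof
  show "(\<Union>k. {U. openin (\<tau> k) U}) \<subseteq> (\<Union>j. {U. openin (\<tau> (s j)) U})"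
  proof
    fix U assume "U \<in> (\<Union>k. {U. openin (\<tau> k) U})"
    then obtain k where k: "openin (\<tau> k) U" by blast
    have "top_le (\<tau> k) (\<tau> (s k))"
      using chain s by (rule top_le_chain_mono[OF _ strict_mono_imp_increasing])
    then show "U \<in> (\<Union>j. {U. openin (\<tau> (s j)) U})" using k unfolding top_le_def by blast
  qed
qed blast

lemma strict_mono_prod_encode: "strict_mono (\<lambda>j. prod_encode (i, j))"
  by (rule strict_monoI_Suc) (simp add: prod_encode_def)

lemma club_good: "club G M \<phi> C \<Longrightarrow> T \<in> C \<Longrightarrow> good_top G M \<phi> T"
  unfolding club_def by blast

lemma club_cofinal: "club G M \<phi> C \<Longrightarrow> good_top G M \<phi> T \<Longrightarrow> \<exists>S\<in>C. top_le T S"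
  unfolding club_def by blast

lemma club_closed:
  "club G M \<phi> C \<Longrightarrow> (\<And>i. \<tau> i \<in> C) \<Longrightarrow> (\<And>i. top_le (\<tau> i) (\<tau> (Suc i))) \<Longrightarrow>
   topology_generated_by (\<Union>i. {U. openin (\<tau> i) U}) \<in> C"
  unfolding club_def by blast

lemma clubs_interleaved_chain:
  fixes C :: "nat \<Rightarrow> 'a topology set"
  assumes clubs: "\<And>i. club G M \<phi> (C i)" and T: "good_top G M \<phi> T"
  obtains \<tau> where "\<And>k. \<tau> k \<in> C (fst (prod_decode k))" "\<And>k. top_le T (\<tau> k)"
    and "\<And>k. top_le (\<tau> k) (\<tau> (Suc k))"
proof -
  have "\<exists>\<tau>. \<forall>k. (\<tau> k \<in> C (fst (prod_decode k)) \<and> top_le T (\<tau> k)) \<and> top_le (\<tau> k) (\<tau> (Suc k))"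
  proof (rule dependent_nat_choice)
    show "\<exists>S. S \<in> C (fst (prod_decode 0)) \<and> top_le T S"
      using club_cofinal[OF clubs T] by blast
  next
    fix S k assume S: "S \<in> C (fst (prod_decode k)) \<and> top_le T S"
    then have "good_top G M \<phi> S" using club_good[OF clubs] by blast
    then obtain S' where "S' \<in> C (fst (prod_decode (Suc k)))" "top_le S S'"
      using club_cofinal[OF clubs] by blast
    then show "\<exists>S'. (S' \<in> C (fst (prod_decode (Suc k))) \<and> top_le T S') \<and> top_le S S'"
      using S top_le_trans by blast
  qed
  then show thesis using that by blast
qed

lemma club_Inter_cofinal:
  fixes C :: "nat \<Rightarrow> 'a topology set"
  assumes clubs: "\<And>i. club G M \<phi> (C i)" and T: "good_top G M \<phi> T"
  shows "\<exists>S\<in>(\<Inter>i. C i). top_le T S"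
proof -
  obtain \<tau> where mem: "\<And>k. \<tau> k \<in> C (fst (prod_decode k))" and above: "\<And>k. top_le T (\<tau> k)"
    and chain: "\<And>k. top_le (\<tau> k) (\<tau> (Suc k))"
    using clubs_interleaved_chain[where C = C, OF clubs T] by blast
  define S where "S = topology_generated_by (\<Union>k. {U. openin (\<tau> k) U})"
  have "S \<in> C i" for i
  proof -
    let ?s = "\<lambda>j. prod_encode (i, j)"
    have sub_mem: "\<tau> (?s j) \<in> C i" for j
      using mem[of "?s j"] by simp
    have sub_chain: "top_le (\<tau> (?s j)) (\<tau> (?s (Suc j)))" for j
      by (rule top_le_chain_mono[of \<tau>, OF chain])
        (simp add: strict_mono_leD[OF strict_mono_prod_encode])
    have "topology_generated_by (\<Union>j. {U. openin (\<tau> (?s j)) U}) \<in> C i"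
      by (rule club_closed[of G M \<phi> "C i" "\<lambda>j. \<tau> (?s j)", OF clubs sub_mem sub_chain])
    then show ?thesis
      unfolding S_def Union_opens_chain_subseq[of \<tau>, OF chain strict_mono_prod_encode] .
  qed
  moreover have "top_le T S"
    unfolding S_def
    by (rule top_le_trans[OF above[of 0] top_le_topology_generated_by]) blast
  ultimately show ?thesis by blast
qed

theorem lemma3p4:
  fixes G :: "('g, 'b) monoid_scheme" and M :: "'a measure" and \<phi> :: "'g \<Rightarrow> 'a \<Rightarrow> 'a"
    and C :: "nat \<Rightarrow> 'a topology set"
  assumes "group G" and "countable (carrier G)"
    and "standard_Borel M" and "Borel_action G M \<phi>"
    and "\<And>i. club G M \<phi> (C i)"
  shows "club G M \<phi> (\<Inter>i. C i)"
  unfolding club_def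
proof (intro conjI allI impI)
  show "(\<Inter>i. C i) \<subseteq> {T. good_top G M \<phi> T}"
    using club_good[OF assms(5)[of 0]] by blast
next
  fix T assume "good_top G M \<phi> T"
  then show "\<exists>S\<in>(\<Inter>i. C i). top_le T S" by (rule club_Inter_cofinal[OF assms(5)])
next
  fix \<tau> :: "nat \<Rightarrow> 'a topology"
  assume "\<forall>i. \<tau> i \<in> (\<Inter>i. C i)" "\<forall>i. top_le (\<tau> i) (\<tau> (Suc i))"
  then show "topology_generated_by (\<Union>i. {U. openin (\<tau> i) U}) \<in> (\<Inter>i. C i)"
    using club_closed[OF assms(5)] by blast
qed

end
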